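(* Let $\Phi$ be a finite crystallographic root system with simple roots $\Delta$ and Weyl group $W$, let $\Gamma\subseteq\Delta$ with parabolic subgroup $W_\Gamma$, and let $\beta\in\Phi^+_\Gamma$. Then the random variable $\mathcal{X}_\beta$ is the same when considered on $W$ as when considered on $W_\Gamma$, i.e. \[ \frac{|\{w\in W: w(\beta)\in\Phi^-\}|}{|W|}=\frac{|\{w\in W_\Gamma: w(\beta)\in\Phi^-\}|}{|W_\Gamma|}. \]
   Context: $\Phi^+$ are the positive roots and $\Phi^-=-\Phi^+$. $W_\Gamma=\langle s_\alpha:\alpha\in\Gamma\rangle$ and $\Phi^+_\Gamma=\Phi^+\cap\operatorname{span}(\Gamma)$. For a group $G\in\{W,W_\Gamma\}$ with the uniform distribution, $\mathcal{X}_\beta$ is the Bernoulli random variable with $\mathcal{X}_\beta(w)=1$ if $w(\beta)\in\Phi^-$ and $0$ otherwise. *)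

theory Defs
  imports "HOL-Analysis.Analysis"
begin

definition refl :: "'a::euclidean_space \<Rightarrow> 'a \<Rightarrow> 'a" where
  "refl \<alpha> x = x - ((2 * (x \<bullet> \<alpha>)) / (\<alpha> \<bullet> \<alpha>)) *\<^sub>R \<alpha>"

definition crystallographic_root_system :: "'a::euclidean_space set \<Rightarrow> bool" where
  "crystallographic_root_system \<Phi> \<longleftrightarrow>
     finite \<Phi> \<and> 0 \<notin> \<Phi> \<and>
     (\<forall>\<alpha>\<in>\<Phi>. \<forall>c::real. c *\<^sub>R \<alpha> \<in> \<Phi> \<longleftrightarrow> c = 1 \<or> c = -1) \<and>
     (\<forall>\<alpha>\<in>\<Phi>. refl \<alpha> ` \<Phi> = \<Phi>) \<and>
     (\<forall>\<alpha>\<in>\<Phi>. \<forall>\<beta>\<in>\<Phi>. (2 * (\<beta> \<bullet> \<alpha>)) / (\<alpha> \<bullet> \<alpha>) \<in> \<int>)"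

definition nonneg_comb :: "'a::euclidean_space set \<Rightarrow> 'a \<Rightarrow> bool" where
  "nonneg_comb \<Delta> x \<longleftrightarrow> (\<exists>c. (\<forall>\<alpha>\<in>\<Delta>. c \<alpha> \<ge> (0::real)) \<and> x = (\<Sum>\<alpha>\<in>\<Delta>. c \<alpha> *\<^sub>R \<alpha>))"

definition simple_system :: "'a::euclidean_space set \<Rightarrow> 'a set \<Rightarrow> bool" where
  "simple_system \<Phi> \<Delta> \<longleftrightarrow> \<Delta> \<subseteq> \<Phi> \<and> independent \<Delta> \<and>
     (\<forall>\<beta>\<in>\<Phi>. nonneg_comb \<Delta> \<beta> \<or> nonneg_comb \<Delta> (- \<beta>))"

definition pos_roots :: "'a::euclidean_space set \<Rightarrow> 'a set \<Rightarrow> 'a set" where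
  "pos_roots \<Phi> \<Delta> = {\<beta>\<in>\<Phi>. nonneg_comb \<Delta> \<beta>}"

definition neg_roots :: "'a::euclidean_space set \<Rightarrow> 'a set \<Rightarrow> 'a set" where
  "neg_roots \<Phi> \<Delta> = uminus ` pos_roots \<Phi> \<Delta>"

inductive_set refl_group :: "'a::euclidean_space set \<Rightarrow> ('a \<Rightarrow> 'a) set" for S where
  id_in: "id \<in> refl_group S"
| step: "w \<in> refl_group S \<Longrightarrow> \<alpha> \<in> S \<Longrightarrow> refl \<alpha> \<circ> w \<in> refl_group S"

abbreviation weyl_group :: "'a::euclidean_space set \<Rightarrow> ('a \<Rightarrow> 'a) set" where
  "weyl_group \<Phi> \<equiv> refl_group \<Phi>"

end

theory Submission
  imports Defs
begin

text \<open>Every coset \<open>w W\<^sub>\<Gamma>\<close> contains an element \<open>u\<close> mapping the positive roots in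
  \<open>span \<Gamma>\<close> to positive roots: take \<open>u\<close> with the fewest such roots sent to negative ones; if
  \<open>u a\<close> were negative for some \<open>a \<in> \<Gamma>\<close>, then \<open>u s\<^sub>a\<close> would have fewer, because \<open>s\<^sub>a\<close>
  permutes the positive roots other than \<open>a\<close>. Such a \<open>u\<close> preserves the sign of every root in
  \<open>span \<Gamma>\<close>, and \<open>W\<^sub>\<Gamma>\<close> keeps \<open>\<beta>\<close> inside \<open>span \<Gamma>\<close>, so for every \<open>w \<in> W\<close> exactly as many
  \<open>v \<in> W\<^sub>\<Gamma>\<close> make \<open>w v \<beta>\<close> negative as make \<open>v \<beta>\<close> negative. Summing over \<open>w \<in> W\<close> and
  exchanging the order of summation (right translation by \<open>v\<close> permutes \<open>W\<close>) gives
  \<open>|W\<^sub>\<Gamma>| \<cdot> #{w \<in> W. w \<beta> < 0} = |W| \<cdot> #{v \<in> W\<^sub>\<Gamma>. v \<beta> < 0}\<close>.\<close>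

section \<open>Reflection groups\<close>

lemma linear_refl: "linear (refl a)"
  unfolding refl_def
  by (intro linearI) (auto simp: algebra_simps add_divide_distrib diff_divide_distrib)

lemma refl_refl: "a \<noteq> 0 \<Longrightarrow> refl a (refl a x) = x"
  unfolding refl_def by (simp add: algebra_simps)

lemma refl_self: "a \<noteq> 0 \<Longrightarrow> refl a a = - a"
  unfolding refl_def by (simp add: algebra_simps scaleR_2)

lemma inner_refl: "a \<noteq> 0 \<Longrightarrow> refl a x \<bullet> refl a y = x \<bullet> y"
  unfolding refl_def
  by (simp add: algebra_simps inner_commute power2_eq_square)

lemma refl_minus_in_span: "refl a x - x \<in> span {a}"
  unfolding refl_def by (simp add: span_base span_scale span_neg)

lemma refl_in_refl_group: "a \<in> S \<Longrightarrow> refl a \<in> refl_group S"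
  using refl_group.step[OF refl_group.id_in] by simp

lemma refl_group_comp: "w \<in> refl_group S \<Longrightarrow> v \<in> refl_group S \<Longrightarrow> w \<circ> v \<in> refl_group S"
  by (induction rule: refl_group.induct) (auto simp: comp_assoc intro: refl_group.intros)

lemma refl_group_mono: "w \<in> refl_group S \<Longrightarrow> S \<subseteq> T \<Longrightarrow> w \<in> refl_group T"
  by (induction rule: refl_group.induct) (auto intro: refl_group.intros)

lemma linear_refl_group: "w \<in> refl_group S \<Longrightarrow> linear w"
proof (induction rule: refl_group.induct)
  case (step w a)
  show ?case using linear_compose[OF step.IH linear_refl] .
qed (rule linear_id)

lemma refl_group_has_inverse:
  "w \<in> refl_group S \<Longrightarrow> 0 \<notin> S \<Longrightarrow> \<exists>w'\<in>refl_group S. w' \<circ> w = id \<and> w \<circ> w' = id"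
proof (induction rule: refl_group.induct)
  case id_in
  then show ?case by (metis refl_group.id_in id_comp)
next
  case (step w a)
  then obtain w' where w': "w' \<in> refl_group S" "w' \<circ> w = id" "w \<circ> w' = id" by blast
  have "a \<noteq> 0" using step by auto
  then have "(w' \<circ> refl a) \<circ> (refl a \<circ> w) = id" "(refl a \<circ> w) \<circ> (w' \<circ> refl a) = id"
    using w' by (auto simp: fun_eq_iff refl_refl)
  moreover have "w' \<circ> refl a \<in> refl_group S"
    using w' step refl_group_comp refl_in_refl_group by blast
  ultimately show ?case by blast
qed

lemma refl_group_inv:
  assumes "w \<in> refl_group S" "0 \<notin> S"
  shows "inv w \<in> refl_group S" "inv w \<circ> w = id" "w \<circ> inv w = id"
proof -
  obtain w' where w': "w' \<in> refl_group S" "w' \<circ> w = id" "w \<circ> w' = id"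
    using refl_group_has_inverse[OF assms] by auto
  then have "inv w = w'" by (simp add: inv_unique_comp)
  then show "inv w \<in> refl_group S" "inv w \<circ> w = id" "w \<circ> inv w = id" using w' by auto
qed

lemma inner_refl_group: "w \<in> refl_group S \<Longrightarrow> 0 \<notin> S \<Longrightarrow> w x \<bullet> w y = x \<bullet> y"
  by (induction rule: refl_group.induct) (auto, metis inner_refl)

lemma refl_group_minus_in_span: "w \<in> refl_group S \<Longrightarrow> w x - x \<in> span S"
proof (induction rule: refl_group.induct)
  case id_in
  then show ?case by (simp add: span_zero)
next
  case (step w a)
  have "refl a (w x) - w x \<in> span S"
    using refl_minus_in_span[of a "w x"] span_mono[of "{a}" S] step by auto
  then have "(refl a (w x) - w x) + (w x - x) \<in> span S" using step span_add by blast
  then show ?case by simp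
qed

lemma refl_group_in_span:
  assumes "w \<in> refl_group S" "x \<in> span S"
  shows "w x \<in> span S"
  using span_add[OF refl_group_minus_in_span[OF assms(1), of x] assms(2)] by simp

lemma refl_group_preserves:
  "w \<in> refl_group S \<Longrightarrow> (\<And>a. a \<in> S \<Longrightarrow> refl a ` P \<subseteq> P) \<Longrightarrow> x \<in> P \<Longrightarrow> w x \<in> P"
  by (induction arbitrary: x rule: refl_group.induct) auto

text \<open>An element fixing \<open>S\<close> pointwise moves every vector by something in \<open>span S\<close> that is
  orthogonal to \<open>S\<close>, hence by zero.\<close>
lemma refl_group_eq_id_if_fixes:
  assumes "w \<in> refl_group S" "0 \<notin> S" "\<And>x. x \<in> S \<Longrightarrow> w x = x"
  shows "w = id"
proof
  fix x
  have "(w x - x) \<bullet> y = 0" if "y \<in> S" for y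
    using inner_refl_group[OF assms(1,2), of x y] assms(3)[OF that] by (simp add: inner_diff_left)
  then have "(w x - x) \<bullet> y = 0" if "y \<in> span S" for y
    using orthogonal_to_span[OF that, of "w x - x"] by (auto simp: orthogonal_def)
  from this[OF refl_group_minus_in_span[OF assms(1), of x]] show "w x = id x"
    by simp
qed

lemma finite_refl_group:
  assumes "finite S" "0 \<notin> S" "\<And>a. a \<in> S \<Longrightarrow> refl a ` S \<subseteq> S"
  shows "finite (refl_group S)"
proof -
  have "inj_on (\<lambda>w. restrict w S) (refl_group S)"
  proof (rule inj_onI)
    fix w1 w2
    assume w: "w1 \<in> refl_group S" "w2 \<in> refl_group S" "restrict w1 S = restrict w2 S"
    have "inv w2 \<circ> w1 \<in> refl_group S" using refl_group_inv refl_group_comp w assms by blast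
    moreover have "(inv w2 \<circ> w1) x = x" if "x \<in> S" for x
    proof -
      have "w1 x = w2 x" using w(3) that by (metis restrict_apply')
      then show ?thesis using refl_group_inv(2)[OF w(2) assms(2)] by (metis comp_apply id_apply)
    qed
    ultimately have "inv w2 \<circ> w1 = id" using refl_group_eq_id_if_fixes assms by blast
    then have "w2 \<circ> (inv w2 \<circ> w1) = w2" by simp
    then show "w1 = w2" using refl_group_inv(3)[OF w(2) assms(2)] by (simp add: comp_assoc[symmetric])
  qed
  moreover have "(\<lambda>w. restrict w S) ` refl_group S \<subseteq> S \<rightarrow>\<^sub>E S"
    using refl_group_preserves[of _ S S] assms by auto
  moreover have "finite (S \<rightarrow>\<^sub>E S)" using assms by (simp add: finite_PiE)
  ultimately show ?thesis by (meson finite_imageD finite_subset)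
qed

lemma bij_betw_refl_group_comp_left:
  assumes "g \<in> refl_group S" "0 \<notin> S"
  shows "bij_betw ((\<circ>) g) (refl_group S) (refl_group S)"
  by (rule bij_betw_byWitness[where f' = "(\<circ>) (inv g)"])
    (use refl_group_inv[OF assms] refl_group_comp assms(1) in \<open>auto simp: comp_assoc[symmetric]\<close>)

lemma bij_betw_refl_group_comp_right:
  assumes "g \<in> refl_group S" "0 \<notin> S"
  shows "bij_betw (\<lambda>v. v \<circ> g) (refl_group S) (refl_group S)"
  by (rule bij_betw_byWitness[where f' = "\<lambda>v. v \<circ> inv g"])
    (use refl_group_inv[OF assms] refl_group_comp assms(1) in \<open>auto simp: comp_assoc\<close>)

lemma card_filter_bij_betw:
  assumes "bij_betw f A A"
  shows "card {x \<in> A. P (f x)} = card {x \<in> A. P x}"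
proof -
  have "f ` {x \<in> A. P (f x)} = {y \<in> f ` A. P y}" by blast
  also have "f ` A = A" using assms by (simp add: bij_betw_def)
  finally have "bij_betw f {x \<in> A. P (f x)} {x \<in> A. P x}"
    by (intro bij_betw_subset[OF assms]) auto
  then show ?thesis by (rule bij_betw_same_card)
qed

lemma sum_card_filter_swap:
  "finite A \<Longrightarrow> finite B \<Longrightarrow>
    (\<Sum>a\<in>A. card {b \<in> B. R a b}) = (\<Sum>b\<in>B. card {a \<in> A. R a b})"
  unfolding card_eq_sum by (rule sum.swap_restrict)

section \<open>Nonnegative combinations of an independent set\<close>

lemma nonneg_comb_0: "nonneg_comb \<Delta> 0"
  unfolding nonneg_comb_def by (rule exI[of _ "\<lambda>_. 0"]) auto

lemma nonneg_comb_add: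
  assumes "nonneg_comb \<Delta> x" "nonneg_comb \<Delta> y"
  shows "nonneg_comb \<Delta> (x + y)"
proof -
  obtain c d where "\<forall>a\<in>\<Delta>. c a \<ge> 0" "x = (\<Sum>a\<in>\<Delta>. c a *\<^sub>R a)"
    and "\<forall>a\<in>\<Delta>. d a \<ge> 0" "y = (\<Sum>a\<in>\<Delta>. d a *\<^sub>R a)"
    using assms unfolding nonneg_comb_def by blast
  then show ?thesis
    unfolding nonneg_comb_def by (intro exI[of _ "\<lambda>a. c a + d a"]) (simp add: scaleR_add_left sum.distrib)
qed

lemma nonneg_comb_scaleR:
  assumes "nonneg_comb \<Delta> x" "r \<ge> 0"
  shows "nonneg_comb \<Delta> (r *\<^sub>R x)"
proof -
  obtain c where "\<forall>a\<in>\<Delta>. c a \<ge> 0" "x = (\<Sum>a\<in>\<Delta>. c a *\<^sub>R a)"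
    using assms(1) unfolding nonneg_comb_def by blast
  then show ?thesis
    unfolding nonneg_comb_def using assms(2) by (intro exI[of _ "\<lambda>a. r * c a"]) (simp add: scaleR_sum_right)
qed

lemma nonneg_comb_sum:
  "finite A \<Longrightarrow> (\<And>a. a \<in> A \<Longrightarrow> nonneg_comb \<Delta> (f a)) \<Longrightarrow> nonneg_comb \<Delta> (sum f A)"
  by (induction rule: finite_induct) (auto intro: nonneg_comb_0 nonneg_comb_add)

lemma nonneg_comb_base: "a \<in> \<Delta> \<Longrightarrow> finite \<Delta> \<Longrightarrow> nonneg_comb \<Delta> a"
  unfolding nonneg_comb_def
  by (auto intro!: exI[of _ "\<lambda>b. if b = a then 1 else 0"]
      simp: if_distrib[of "\<lambda>r. r *\<^sub>R _"] cong: if_cong)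

lemma independent_coeffs_eq:
  fixes \<Delta> :: "'a::euclidean_space set"
  assumes "independent \<Delta>" "(\<Sum>v\<in>\<Delta>. c v *\<^sub>R v) = (\<Sum>v\<in>\<Delta>. d v *\<^sub>R v)" "v \<in> \<Delta>"
  shows "c v = d v"
proof -
  have "(\<Sum>v\<in>\<Delta>. (c v - d v) *\<^sub>R v) = 0"
    using assms(2) by (simp add: scaleR_diff_left sum_subtractf)
  then have "c v - d v = 0"
    using assms(1,3) unfolding independent_explicit by (blast dest: spec[of _ "\<lambda>v. c v - d v"])
  then show ?thesis by simp
qed

text \<open>Coordinates with respect to an independent \<open>\<Delta>\<close> are unique, so if two nonnegative
  combinations add up to a vector supported on \<open>\<Gamma>\<close>, neither of them can use \<open>\<Delta> - \<Gamma>\<close>.\<close>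
lemma nonneg_comb_subset_if_add_in_span:
  assumes "independent \<Delta>" "\<Gamma> \<subseteq> \<Delta>" "nonneg_comb \<Delta> x" "nonneg_comb \<Delta> y" "x + y \<in> span \<Gamma>"
  shows "nonneg_comb \<Gamma> x"
proof -
  have fin: "finite \<Delta>" using assms(1) independent_imp_finite by blast
  then have "finite \<Gamma>" using assms(2) finite_subset by blast
  then obtain f where f: "x + y = (\<Sum>b\<in>\<Gamma>. f b *\<^sub>R b)" using assms(5) span_finite by auto
  obtain c where c: "\<forall>b\<in>\<Delta>. c b \<ge> 0" "x = (\<Sum>b\<in>\<Delta>. c b *\<^sub>R b)"
    using assms(3) unfolding nonneg_comb_def by blast
  obtain e where e: "\<forall>b\<in>\<Delta>. e b \<ge> 0" "y = (\<Sum>b\<in>\<Delta>. e b *\<^sub>R b)"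
    using assms(4) unfolding nonneg_comb_def by blast
  define f' where "f' b = (if b \<in> \<Gamma> then f b else 0)" for b
  have "(\<Sum>b\<in>\<Delta>. f' b *\<^sub>R b) = (\<Sum>b\<in>\<Gamma>. f b *\<^sub>R b)"
    using fin assms(2) by (subst sum.mono_neutral_right[of \<Delta> \<Gamma>]) (auto simp: f'_def)
  then have coeffs: "(\<Sum>b\<in>\<Delta>. (c b + e b) *\<^sub>R b) = (\<Sum>b\<in>\<Delta>. f' b *\<^sub>R b)"
    using c(2) e(2) f by (simp add: scaleR_add_left sum.distrib)
  have "c b = 0" if "b \<in> \<Delta> - \<Gamma>" for b
  proof -
    have "c b + e b = 0"
      using independent_coeffs_eq[OF assms(1) coeffs] that by (simp add: f'_def)
    moreover have "c b \<ge> 0" "e b \<ge> 0" using c(1) e(1) that by auto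
    ultimately show ?thesis by linarith
  qed
  then have "x = (\<Sum>b\<in>\<Gamma>. c b *\<^sub>R b)"
    using c(2) sum.mono_neutral_right[OF fin assms(2), of "\<lambda>b. c b *\<^sub>R b"] by simp
  then show ?thesis using c(1) assms(2) unfolding nonneg_comb_def by blast
qed

lemma nonneg_comb_antisym:
  assumes "independent \<Delta>" "nonneg_comb \<Delta> x" "nonneg_comb \<Delta> (- x)"
  shows "x = 0"
  using nonneg_comb_subset_if_add_in_span[OF assms(1) empty_subsetI assms(2,3)]
  by (simp add: nonneg_comb_def)

lemma nonneg_comb_subset_if_in_span:
  assumes "independent \<Delta>" "\<Gamma> \<subseteq> \<Delta>" "nonneg_comb \<Delta> x" "x \<in> span \<Gamma>"
  shows "nonneg_comb \<Gamma> x"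
  using nonneg_comb_subset_if_add_in_span[OF assms(1-3) nonneg_comb_0] assms(4) by simp

section \<open>Root systems with a simple system\<close>

locale based_root_system =
  fixes \<Phi> \<Delta> :: "'a::euclidean_space set"
  assumes finite_roots: "finite \<Phi>"
    and zero_notin_roots: "0 \<notin> \<Phi>"
    and scaleR_in_roots_iff: "\<alpha> \<in> \<Phi> \<Longrightarrow> c *\<^sub>R \<alpha> \<in> \<Phi> \<longleftrightarrow> c = 1 \<or> c = -1"
    and refl_roots: "\<alpha> \<in> \<Phi> \<Longrightarrow> refl \<alpha> ` \<Phi> = \<Phi>"
    and simple: "simple_system \<Phi> \<Delta>"
begin

abbreviation pos where "pos \<equiv> pos_roots \<Phi> \<Delta>"
abbreviation neg where "neg \<equiv> neg_roots \<Phi> \<Delta>"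

lemma simple_subset_roots: "\<Delta> \<subseteq> \<Phi>"
  and independent_simple: "independent \<Delta>"
  and root_nonneg_comb_cases: "\<beta> \<in> \<Phi> \<Longrightarrow> nonneg_comb \<Delta> \<beta> \<or> nonneg_comb \<Delta> (- \<beta>)"
  using simple unfolding simple_system_def by auto

lemma finite_simple: "finite \<Delta>"
  using independent_simple independent_imp_finite by blast

lemma uminus_in_roots: "\<beta> \<in> \<Phi> \<Longrightarrow> - \<beta> \<in> \<Phi>"
  using scaleR_in_roots_iff[of \<beta> "-1"] by simp

lemma mem_pos_roots: "x \<in> pos \<longleftrightarrow> x \<in> \<Phi> \<and> nonneg_comb \<Delta> x"
  unfolding pos_roots_def by auto

lemma mem_neg_roots: "x \<in> neg \<longleftrightarrow> x \<in> \<Phi> \<and> nonneg_comb \<Delta> (- x)"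
proof
  assume "x \<in> neg"
  then obtain y where "y \<in> pos" "x = - y" unfolding neg_roots_def by blast
  then show "x \<in> \<Phi> \<and> nonneg_comb \<Delta> (- x)" using uminus_in_roots by (simp add: mem_pos_roots)
next
  assume "x \<in> \<Phi> \<and> nonneg_comb \<Delta> (- x)"
  then have "- x \<in> pos" using uminus_in_roots by (simp add: mem_pos_roots)
  then show "x \<in> neg" unfolding neg_roots_def by (metis image_eqI minus_minus)
qed

lemma neg_roots_iff_uminus_pos: "x \<in> neg \<longleftrightarrow> - x \<in> pos"
  unfolding mem_pos_roots mem_neg_roots by (metis minus_minus uminus_in_roots)

lemma pos_notin_neg: "x \<in> pos \<Longrightarrow> x \<notin> neg"
  using nonneg_comb_antisym[OF independent_simple, of x] zero_notin_roots
  unfolding mem_pos_roots mem_neg_roots by blast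

lemma root_pos_or_neg: "x \<in> \<Phi> \<Longrightarrow> x \<in> pos \<or> x \<in> neg"
  using root_nonneg_comb_cases[of x] unfolding mem_pos_roots mem_neg_roots by blast

lemma simple_in_pos: "a \<in> \<Delta> \<Longrightarrow> a \<in> pos"
  using simple_subset_roots nonneg_comb_base[OF _ finite_simple, of a] unfolding mem_pos_roots by blast

lemma refl_group_maps_roots: "S \<subseteq> \<Phi> \<Longrightarrow> w \<in> refl_group S \<Longrightarrow> x \<in> \<Phi> \<Longrightarrow> w x \<in> \<Phi>"
  using refl_group_preserves[of w S \<Phi> x] refl_roots by (metis subsetD subset_refl)

lemma finite_weyl_group: "finite (weyl_group \<Phi>)"
  using finite_refl_group[OF finite_roots zero_notin_roots] refl_roots by simp

lemma pos_preserved_if_simple_pos: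
  assumes "\<Gamma> \<subseteq> \<Delta>" "linear u" "\<And>x. x \<in> \<Phi> \<Longrightarrow> u x \<in> \<Phi>" "\<And>a. a \<in> \<Gamma> \<Longrightarrow> u a \<in> pos"
    and "\<gamma> \<in> pos" "\<gamma> \<in> span \<Gamma>"
  shows "u \<gamma> \<in> pos"
proof -
  obtain c where c: "\<forall>a\<in>\<Gamma>. c a \<ge> 0" "\<gamma> = (\<Sum>a\<in>\<Gamma>. c a *\<^sub>R a)"
    using nonneg_comb_subset_if_in_span[OF independent_simple assms(1)] assms(5,6)
    unfolding mem_pos_roots nonneg_comb_def by blast
  have "u \<gamma> = (\<Sum>a\<in>\<Gamma>. c a *\<^sub>R u a)"
    using c(2) assms(2) by (simp add: linear_sum linear_scale)
  moreover have "nonneg_comb \<Delta> (\<Sum>a\<in>\<Gamma>. c a *\<^sub>R u a)"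
    using finite_subset[OF assms(1) finite_simple] c(1) assms(4)
    by (intro nonneg_comb_sum nonneg_comb_scaleR) (auto simp: mem_pos_roots)
  moreover have "u \<gamma> \<in> \<Phi>" using assms(3,5) by (auto simp: mem_pos_roots)
  ultimately show ?thesis by (simp add: mem_pos_roots)
qed

text \<open>\<open>refl a \<gamma> - \<gamma>\<close> is a multiple of \<open>a\<close>, so if \<open>refl a \<gamma>\<close> were negative, \<open>\<gamma>\<close> would be
  a nonnegative multiple of \<open>a\<close>, i.e. \<open>a\<close> itself.\<close>
lemma refl_simple_pos:
  assumes "a \<in> \<Delta>" "\<gamma> \<in> pos" "\<gamma> \<noteq> a"
  shows "refl a \<gamma> \<in> pos"
proof (rule ccontr)
  assume "refl a \<gamma> \<notin> pos"
  have a: "a \<in> \<Phi>" using assms(1) simple_subset_roots by blast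
  have \<gamma>: "\<gamma> \<in> \<Phi>" "nonneg_comb \<Delta> \<gamma>" using assms(2) by (auto simp: mem_pos_roots)
  have "refl a \<gamma> \<in> \<Phi>" using refl_roots[OF a] \<gamma>(1) by blast
  with \<open>refl a \<gamma> \<notin> pos\<close> have "nonneg_comb \<Delta> (- refl a \<gamma>)"
    using root_pos_or_neg by (auto simp: mem_neg_roots)
  moreover have "\<gamma> + - refl a \<gamma> \<in> span {a}"
    using span_neg[OF refl_minus_in_span[of a \<gamma>]] by simp
  ultimately have "nonneg_comb {a} \<gamma>"
    using nonneg_comb_subset_if_add_in_span[OF independent_simple _ \<gamma>(2)] assms(1) by simp
  then obtain c where c: "c \<ge> 0" "\<gamma> = c *\<^sub>R a" by (auto simp: nonneg_comb_def)
  then have "c = 1" using scaleR_in_roots_iff[OF a, of c] \<gamma>(1) by simp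
  then show False using c assms(3) by simp
qed

definition inversions :: "'a set \<Rightarrow> ('a \<Rightarrow> 'a) \<Rightarrow> 'a set" where
  "inversions \<Gamma> u = {\<gamma> \<in> pos \<inter> span \<Gamma>. u \<gamma> \<in> neg}"

lemma finite_inversions: "finite (inversions \<Gamma> u)"
  by (rule finite_subset[OF _ finite_roots]) (auto simp: inversions_def mem_pos_roots)

lemma inversions_comp_refl_subset:
  assumes "\<Gamma> \<subseteq> \<Delta>" "linear u" "a \<in> \<Gamma>" "u a \<in> neg"
  shows "inversions \<Gamma> (u \<circ> refl a) \<subseteq> refl a ` (inversions \<Gamma> u - {a})"
proof
  fix \<gamma> assume "\<gamma> \<in> inversions \<Gamma> (u \<circ> refl a)"
  then have \<gamma>: "\<gamma> \<in> pos" "\<gamma> \<in> span \<Gamma>" "u (refl a \<gamma>) \<in> neg"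
    unfolding inversions_def by auto
  have a: "a \<in> \<Delta>" "a \<in> pos" "a \<noteq> 0"
    using assms(1,3) simple_in_pos simple_subset_roots zero_notin_roots by blast+
  have "\<gamma> \<noteq> a"
  proof
    assume "\<gamma> = a"
    then have "u (refl a \<gamma>) = - u a" using refl_self[OF a(3)] linear_neg[OF assms(2)] by simp
    then show False using \<gamma>(3) assms(4) neg_roots_iff_uminus_pos pos_notin_neg by metis
  qed
  then have "refl a \<gamma> \<in> pos" using refl_simple_pos[OF a(1) \<gamma>(1)] by blast
  moreover have "refl a \<gamma> \<in> span \<Gamma>"
    using refl_group_in_span[OF refl_in_refl_group[OF assms(3)] \<gamma>(2)] .
  moreover have "refl a \<gamma> \<noteq> a"
  proof
    assume "refl a \<gamma> = a"
    then have "\<gamma> = - a" using refl_refl[OF a(3), of \<gamma>] refl_self[OF a(3)] by metis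
    then show False using \<gamma>(1) a(2) neg_roots_iff_uminus_pos pos_notin_neg by metis
  qed
  ultimately have "refl a \<gamma> \<in> inversions \<Gamma> u - {a}"
    using \<gamma>(3) unfolding inversions_def by blast
  moreover have "\<gamma> = refl a (refl a \<gamma>)" using refl_refl[OF a(3)] by simp
  ultimately show "\<gamma> \<in> refl a ` (inversions \<Gamma> u - {a})" by blast
qed

lemma card_inversions_comp_refl_less:
  assumes "\<Gamma> \<subseteq> \<Delta>" "linear u" "a \<in> \<Gamma>" "u a \<in> neg"
  shows "card (inversions \<Gamma> (u \<circ> refl a)) < card (inversions \<Gamma> u)"
proof -
  have "card (inversions \<Gamma> (u \<circ> refl a)) \<le> card (inversions \<Gamma> u - {a})"
    using inversions_comp_refl_subset[OF assms] finite_inversions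
    by (meson card_image_le card_mono finite_Diff finite_imageI order_trans)
  also have "\<dots> < card (inversions \<Gamma> u)"
    using assms(1,3,4) simple_in_pos span_base
    by (intro card_Diff1_less[OF finite_inversions]) (auto simp: inversions_def)
  finally show ?thesis .
qed

text \<open>Minimise the number of inversions of \<open>w \<circ> v\<close>: at a minimiser \<open>w \<circ> v\<close> is positive on \<open>\<Gamma>\<close>,
  hence on all positive roots in \<open>span \<Gamma>\<close>.\<close>
lemma exists_coset_elem_pos_on_span:
  assumes "\<Gamma> \<subseteq> \<Delta>" "w \<in> weyl_group \<Phi>"
  obtains v where "v \<in> refl_group \<Gamma>" "\<And>\<gamma>. \<gamma> \<in> pos \<Longrightarrow> \<gamma> \<in> span \<Gamma> \<Longrightarrow> (w \<circ> v) \<gamma> \<in> pos"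
proof -
  have \<Gamma>: "\<Gamma> \<subseteq> \<Phi>" using assms(1) simple_subset_roots by blast
  obtain v where v: "v \<in> refl_group \<Gamma>"
    and min: "\<And>v'. v' \<in> refl_group \<Gamma> \<Longrightarrow>
      card (inversions \<Gamma> (w \<circ> v)) \<le> card (inversions \<Gamma> (w \<circ> v'))"
    using ex_has_least_nat[of "\<lambda>v. v \<in> refl_group \<Gamma>" id "\<lambda>v. card (inversions \<Gamma> (w \<circ> v))"]
      refl_group.id_in by blast
  have u: "w \<circ> v \<in> weyl_group \<Phi>"
    using refl_group_comp[OF assms(2) refl_group_mono[OF v \<Gamma>]] .
  have "(w \<circ> v) a \<in> pos" if "a \<in> \<Gamma>" for a
  proof (rule ccontr)
    assume "(w \<circ> v) a \<notin> pos"
    moreover have "(w \<circ> v) a \<in> \<Phi>" using refl_group_maps_roots[OF order_refl u] \<Gamma> that by blast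
    ultimately have "(w \<circ> v) a \<in> neg" using root_pos_or_neg by blast
    then have "card (inversions \<Gamma> (w \<circ> (v \<circ> refl a))) < card (inversions \<Gamma> (w \<circ> v))"
      using card_inversions_comp_refl_less[OF assms(1) linear_refl_group[OF u] that]
      by (simp add: comp_assoc)
    moreover have "v \<circ> refl a \<in> refl_group \<Gamma>"
      using refl_group_comp[OF v refl_in_refl_group[OF that]] .
    ultimately show False using min by fastforce
  qed
  then have "(w \<circ> v) \<gamma> \<in> pos" if "\<gamma> \<in> pos" "\<gamma> \<in> span \<Gamma>" for \<gamma>
    using pos_preserved_if_simple_pos[OF assms(1) linear_refl_group[OF u] _ _ that]
      refl_group_maps_roots[OF order_refl u] by blast
  with v show thesis using that by blast
qed

lemma neg_iff_if_pos_on_span: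
  assumes "linear u" "\<And>\<gamma>. \<gamma> \<in> pos \<Longrightarrow> \<gamma> \<in> span \<Gamma> \<Longrightarrow> u \<gamma> \<in> pos"
    and "y \<in> \<Phi>" "y \<in> span \<Gamma>"
  shows "u y \<in> neg \<longleftrightarrow> y \<in> neg"
proof (cases "y \<in> pos")
  case True
  then show ?thesis using assms(2,4) pos_notin_neg by blast
next
  case False
  then have "y \<in> neg" using root_pos_or_neg assms(3) by blast
  then have "u (- y) \<in> pos" using assms(2,4) span_neg neg_roots_iff_uminus_pos by blast
  then show ?thesis using \<open>y \<in> neg\<close> linear_neg[OF assms(1)] neg_roots_iff_uminus_pos by simp
qed

lemma card_coset_neg:
  assumes "\<Gamma> \<subseteq> \<Delta>" "w \<in> weyl_group \<Phi>" "\<beta> \<in> \<Phi>" "\<beta> \<in> span \<Gamma>"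
  shows "card {v \<in> refl_group \<Gamma>. w (v \<beta>) \<in> neg} = card {v \<in> refl_group \<Gamma>. v \<beta> \<in> neg}"
proof -
  have \<Gamma>: "\<Gamma> \<subseteq> \<Phi>" "0 \<notin> \<Gamma>" using assms(1) simple_subset_roots zero_notin_roots by blast+
  obtain v0 where v0: "v0 \<in> refl_group \<Gamma>"
    and v0_pos: "\<And>\<gamma>. \<gamma> \<in> pos \<Longrightarrow> \<gamma> \<in> span \<Gamma> \<Longrightarrow> (w \<circ> v0) \<gamma> \<in> pos"
    using exists_coset_elem_pos_on_span[OF assms(1,2)] by blast
  have "linear (w \<circ> v0)"
    using linear_refl_group refl_group_comp[OF assms(2) refl_group_mono[OF v0 \<Gamma>(1)]] by blast
  have "card {v \<in> refl_group \<Gamma>. w (v \<beta>) \<in> neg} = card {v \<in> refl_group \<Gamma>. w ((v0 \<circ> v) \<beta>) \<in> neg}"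
    using card_filter_bij_betw[OF bij_betw_refl_group_comp_left[OF v0 \<Gamma>(2)],
        of "\<lambda>v. w (v \<beta>) \<in> neg"] by simp
  also have "\<dots> = card {v \<in> refl_group \<Gamma>. v \<beta> \<in> neg}"
  proof (rule arg_cong[where f = card], rule Collect_cong)
    fix v
    show "(v \<in> refl_group \<Gamma> \<and> w ((v0 \<circ> v) \<beta>) \<in> neg) \<longleftrightarrow> (v \<in> refl_group \<Gamma> \<and> v \<beta> \<in> neg)"
      using neg_iff_if_pos_on_span[OF \<open>linear (w \<circ> v0)\<close> v0_pos, where y = "v \<beta>"]
        refl_group_maps_roots[OF \<Gamma>(1) _ assms(3)] refl_group_in_span[OF _ assms(4)] by auto
  qed
  finally show ?thesis .
qed

text \<open>Double counting of the pairs \<open>(w, v) \<in> W \<times> W\<^sub>\<Gamma>\<close> with \<open>w (v \<beta>)\<close> negative.\<close>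
lemma card_weyl_group_neg:
  assumes "\<Gamma> \<subseteq> \<Delta>" "\<beta> \<in> \<Phi>" "\<beta> \<in> span \<Gamma>"
  shows "card {w \<in> weyl_group \<Phi>. w \<beta> \<in> neg} * card (refl_group \<Gamma>)
       = card (weyl_group \<Phi>) * card {v \<in> refl_group \<Gamma>. v \<beta> \<in> neg}"
proof -
  have \<Gamma>: "refl_group \<Gamma> \<subseteq> weyl_group \<Phi>"
    using assms(1) simple_subset_roots refl_group_mono by blast
  have fin: "finite (refl_group \<Gamma>)" using finite_subset[OF \<Gamma> finite_weyl_group] .
  have "card {w \<in> weyl_group \<Phi>. w \<beta> \<in> neg} * card (refl_group \<Gamma>)
      = (\<Sum>v\<in>refl_group \<Gamma>. card {w \<in> weyl_group \<Phi>. w (v \<beta>) \<in> neg})"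
    using card_filter_bij_betw[OF bij_betw_refl_group_comp_right[OF subsetD[OF \<Gamma>] zero_notin_roots],
        of _ "\<lambda>w. w \<beta> \<in> neg"] by simp
  also have "\<dots> = (\<Sum>w\<in>weyl_group \<Phi>. card {v \<in> refl_group \<Gamma>. w (v \<beta>) \<in> neg})"
    using sum_card_filter_swap[OF fin finite_weyl_group] by simp
  also have "\<dots> = card (weyl_group \<Phi>) * card {v \<in> refl_group \<Gamma>. v \<beta> \<in> neg}"
    using card_coset_neg[OF assms(1) _ assms(2,3)] by simp
  finally show ?thesis .
qed

end

lemma based_root_system_if_crystallographic:
  assumes "crystallographic_root_system \<Phi>" "simple_system \<Phi> \<Delta>"
  shows "based_root_system \<Phi> \<Delta>"
  using assms unfolding crystallographic_root_system_def by unfold_locales blast+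

theorem corollary3p7:
  fixes \<Phi> \<Delta> \<Gamma> :: "'a::euclidean_space set" and \<beta> :: 'a
  assumes "crystallographic_root_system \<Phi>"
    and "simple_system \<Phi> \<Delta>"
    and "\<Gamma> \<subseteq> \<Delta>"
    and "\<beta> \<in> pos_roots \<Phi> \<Delta> \<inter> span \<Gamma>"
  shows "real (card {w \<in> weyl_group \<Phi>. w \<beta> \<in> neg_roots \<Phi> \<Delta>}) / real (card (weyl_group \<Phi>))
       = real (card {w \<in> refl_group \<Gamma>. w \<beta> \<in> neg_roots \<Phi> \<Delta>}) / real (card (refl_group \<Gamma>))"
proof -
  interpret based_root_system \<Phi> \<Delta>
    using based_root_system_if_crystallographic[OF assms(1,2)] .
  have \<beta>: "\<beta> \<in> \<Phi>" "\<beta> \<in> span \<Gamma>" using assms(4) mem_pos_roots by auto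
  have "refl_group \<Gamma> \<subseteq> weyl_group \<Phi>"
    using assms(3) simple_subset_roots refl_group_mono by blast
  then have "finite (refl_group \<Gamma>)" using finite_weyl_group finite_subset by blast
  then have "card (weyl_group \<Phi>) \<noteq> 0" "card (refl_group \<Gamma>) \<noteq> 0"
    using finite_weyl_group refl_group.id_in[of \<Phi>] refl_group.id_in[of \<Gamma>]
    by (auto simp: card_eq_0_iff)
  moreover have "real (card {w \<in> weyl_group \<Phi>. w \<beta> \<in> neg} * card (refl_group \<Gamma>))
      = real (card (weyl_group \<Phi>) * card {v \<in> refl_group \<Gamma>. v \<beta> \<in> neg})"
    using card_weyl_group_neg[OF assms(3) \<beta>] by (rule arg_cong)
  ultimately show ?thesis by (simp add: frac_eq_eq mult.commute)
qed

end
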